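(* $$\sum_{n=0}^{\infty}\Big(\sum_{j=0}^{n}\frac{1}{(2j+1)(2(n-j)+1)}\Big)^2=\frac{\pi^4}{32}.$$ Equivalently, $$1^2+\Big(1\cdot\tfrac13+\tfrac13\cdot 1\Big)^2+\Big(1\cdot\tfrac15+\tfrac13\cdot\tfrac13+\tfrac15\cdot 1\Big)^2+\Big(1\cdot\tfrac17+\tfrac13\cdot\tfrac15+\tfrac15\cdot\tfrac13+\tfrac17\cdot 1\Big)^2+\cdots=\frac{\pi^4}{32}.$$ *)

theory Defs
  imports "HOL-Analysis.Analysis"
begin

end

theory Submission
  imports Defs "HOL-Real_Asymp.Real_Asymp"
begin

text \<open>Write \<open>c j = 1/(2j+1)\<close>, \<open>a n = (\<Sum>j\<le>n. c j * c (n-j))\<close> and \<open>H n = (\<Sum>j\<le>n. c j)\<close>.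
  Partial fractions give \<open>a n = H n / (n+1) = O(log n / n)\<close>, so \<open>S = (\<Sum>n. (a n)\<^sup>2)\<close> is finite.
  Expand \<open>(a n)\<^sup>2\<close> as a sum over triples \<open>(n, j, l)\<close> with \<open>j, l \<le> n\<close>. The diagonal \<open>j = l\<close>
  contributes \<open>(\<Sum>j. (c j)\<^sup>2)\<^sup>2 = (\<pi>\<^sup>2/8)\<^sup>2\<close>. For \<open>j < l\<close> put \<open>l = j+m+1\<close> and \<open>n = l+k\<close>: the
  term becomes \<open>c j * c (j+m+1) * c k * c (k+m+1)\<close>, and \<open>c i - c (i+m+1) = 2(m+1) * c i * c (i+m+1)\<close>
  decouples \<open>j\<close> from \<open>k\<close>; telescoping in both gives \<open>(H m)\<^sup>2 / (4(m+1)\<^sup>2) = (a m)\<^sup>2/4\<close> for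
  each \<open>m\<close>. Together with the mirror part \<open>l < j\<close> this yields \<open>S = (\<pi>\<^sup>2/8)\<^sup>2 + S/2\<close>.\<close>

definition odd_recip :: "nat \<Rightarrow> real" where
  "odd_recip j = 1 / (2 * real j + 1)"

definition odd_harm :: "nat \<Rightarrow> real" where
  "odd_harm n = (\<Sum>j\<le>n. odd_recip j)"

definition odd_conv :: "nat \<Rightarrow> real" where
  "odd_conv n = (\<Sum>j\<le>n. odd_recip j * odd_recip (n - j))"

lemma odd_recip_pos: "odd_recip j > 0"
  by (simp add: odd_recip_def)

lemma odd_recip_antimono: "j \<le> k \<Longrightarrow> odd_recip k \<le> odd_recip j"
  by (simp add: odd_recip_def frac_le)

lemma odd_recip_add: "odd_recip j + odd_recip k = 2 * (real (j + k) + 1) * (odd_recip j * odd_recip k)"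
  by (simp add: odd_recip_def field_simps)

lemma odd_recip_diff: "odd_recip j - odd_recip (j + d) = 2 * real d * (odd_recip j * odd_recip (j + d))"
  by (simp add: odd_recip_def field_simps)

lemma odd_harm_nonneg: "odd_harm n \<ge> 0"
  unfolding odd_harm_def by (intro sum_nonneg less_imp_le odd_recip_pos)

lemma odd_conv_eq: "odd_conv n = odd_harm n / (real n + 1)"
proof -
  have "odd_conv n = (\<Sum>j\<le>n. (odd_recip j + odd_recip (n - j)) / (2 * (real n + 1)))"
    unfolding odd_conv_def by (intro sum.cong) (auto simp: odd_recip_add)
  also have "\<dots> = ((\<Sum>j\<le>n. odd_recip j) + (\<Sum>j\<le>n. odd_recip (n - j))) / (2 * (real n + 1))"
    by (simp add: add_divide_distrib sum.distrib sum_divide_distrib)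
  also have "(\<Sum>j\<le>n. odd_recip (n - j)) = (\<Sum>j\<le>n. odd_recip j)"
    using sum.atLeastAtMost_rev[of odd_recip 0 n] by (simp add: atMost_atLeast0)
  finally show ?thesis by (simp add: odd_harm_def field_simps)
qed

lemma odd_conv_nonneg: "odd_conv n \<ge> 0"
  by (simp add: odd_conv_eq odd_harm_nonneg)

lemma harm_le_ln_plus_one: "n > 0 \<Longrightarrow> harm n \<le> ln (real n) + (1 :: real)"
  using euler_mascheroni_sequence_decreasing[of 1 n] by (simp add: harm_def)

lemma odd_harm_le_harm: "odd_harm n \<le> harm (Suc n)"
  unfolding odd_harm_def harm_altdef lessThan_Suc_atMost
  by (intro sum_mono) (simp add: odd_recip_def divide_simps)

lemma odd_conv_le: "odd_conv n \<le> (ln (real n + 1) + 1) / (real n + 1)"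
proof -
  have "odd_harm n \<le> ln (real n + 1) + 1"
    using odd_harm_le_harm[of n] harm_le_ln_plus_one[of "Suc n"] by (simp add: add.commute)
  thus ?thesis by (simp add: odd_conv_eq divide_right_mono)
qed

lemma summable_odd_conv_sq: "summable (\<lambda>n. odd_conv n ^ 2)"
proof (rule summable_comparison_test')
  let ?b = "\<lambda>n. ((ln (real n + 1) + 1) / (real n + 1)) ^ 2"
  have "summable (\<lambda>n. norm (real n powr (-3/2)))"
    by (simp add: summable_real_powr_iff)
  moreover have "?b \<in> O(\<lambda>n. real n powr (-3/2))"
    by real_asymp
  ultimately show "summable ?b"
    by (rule summable_comparison_test_bigo)
  show "norm (odd_conv n ^ 2) \<le> ?b n" for n
    using odd_conv_le[of n] odd_conv_nonneg[of n] by (simp add: power_mono)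
qed

lemma odd_recip_sq_sums: "(\<lambda>j. odd_recip j ^ 2) sums (pi ^ 2 / 8)"
proof -
  let ?f = "\<lambda>n::nat. 1 / (real n + 1) ^ 2"
  have f_sums: "?f sums (pi ^ 2 / 6)"
    using inverse_squares_sums by (simp add: add.commute)
  have pair: "sum ?f {n * 2..<n * 2 + 2} = odd_recip n ^ 2 + ?f n / 4" for n
  proof -
    have "{n * 2..<n * 2 + 2} = {2 * n, 2 * n + 1}" by auto
    thus ?thesis by (simp add: odd_recip_def field_simps power2_eq_square)
  qed
  have "(\<lambda>n. sum ?f {n * 2..<n * 2 + 2}) sums (pi ^ 2 / 6)"
    by (rule sums_group[OF f_sums]) simp
  hence "(\<lambda>n. odd_recip n ^ 2 + ?f n / 4) sums (pi ^ 2 / 6)"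
    by (simp only: pair)
  from sums_diff[OF this sums_divide[OF f_sums, of 4]] show ?thesis
    by simp
qed

lemma sums_diff_shift:
  fixes f :: "nat \<Rightarrow> 'a :: real_normed_vector"
  assumes "f \<longlonglongrightarrow> 0"
  shows "(\<lambda>j. f j - f (j + k)) sums (\<Sum>i<k. f i)"
proof -
  define F where "F j = (\<Sum>i<k. f (j + i))" for j
  have "(\<lambda>j. f (j + i)) \<longlonglongrightarrow> 0" for i
    using LIMSEQ_ignore_initial_segment[OF assms, of i] by (simp add: add.commute)
  hence "F \<longlonglongrightarrow> 0"
    unfolding F_def by (rule tendsto_null_sum)
  hence "(\<lambda>j. F j - F (Suc j)) sums (F 0 - 0)"
    by (rule telescope_sums')
  moreover have "F j - F (Suc j) = f j - f (j + k)" for j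
  proof -
    have "F j + f (j + k) = (\<Sum>i<Suc k. f (j + i))" by (simp add: F_def)
    also have "\<dots> = f j + F (Suc j)" unfolding F_def by (subst sum.lessThan_Suc_shift) simp
    finally show ?thesis by (simp add: algebra_simps)
  qed
  ultimately show ?thesis by (simp add: F_def)
qed

lemma odd_recip_telescope:
  "((\<lambda>j. odd_recip j - odd_recip (j + Suc m)) has_sum odd_harm m) UNIV"
proof (rule sums_nonneg_imp_has_sum)
  have "odd_recip \<longlonglongrightarrow> 0"
    unfolding odd_recip_def by real_asymp
  thus "(\<lambda>j. odd_recip j - odd_recip (j + Suc m)) sums odd_harm m"
    using sums_diff_shift[of odd_recip "Suc m"] by (simp add: odd_harm_def lessThan_Suc_atMost)
  show "odd_recip j - odd_recip (j + Suc m) \<ge> 0" for j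
    by (simp add: odd_recip_antimono)
qed

lemma has_sum_Sigma_nonneg:
  fixes f :: "'a \<times> 'b \<Rightarrow> real"
  assumes "\<And>x. x \<in> A \<Longrightarrow> ((\<lambda>y. f (x, y)) has_sum g x) (B x)"
    and "(g has_sum S) A"
    and "\<And>x y. x \<in> A \<Longrightarrow> y \<in> B x \<Longrightarrow> f (x, y) \<ge> 0"
  shows "(f has_sum S) (Sigma A B)"
proof (rule has_sum_SigmaI[OF assms(1,2)])
  show "f summable_on Sigma A B"
    using assms by (intro summable_on_SigmaI[where g = g]) (auto simp: summable_on_def)
qed

lemma has_sum_product_nonneg:
  fixes f :: "'a \<Rightarrow> real" and g :: "'b \<Rightarrow> real"
  assumes "(f has_sum A) UNIV" and "(g has_sum B) UNIV"
    and "\<And>x. f x \<ge> 0" and "\<And>y. g y \<ge> 0"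
  shows "((\<lambda>(x, y). f x * g y) has_sum (A * B)) UNIV"
proof -
  have "((\<lambda>(x, y). f x * g y) has_sum (A * B)) (Sigma UNIV (\<lambda>_. UNIV))"
  proof (rule has_sum_Sigma_nonneg)
    show "((\<lambda>y. (\<lambda>(x, y). f x * g y) (x, y)) has_sum f x * B) UNIV" for x
      using has_sum_cmult_right[OF assms(2)] by simp
    show "((\<lambda>x. f x * B) has_sum A * B) UNIV"
      by (rule has_sum_cmult_left[OF assms(1)])
  qed (simp add: assms)
  thus ?thesis by simp
qed

definition conv_sq_term :: "nat \<times> nat \<times> nat \<Rightarrow> real" where
  "conv_sq_term = (\<lambda>(n, j, l). odd_recip j * odd_recip (n - j) * odd_recip l * odd_recip (n - l))"

lemma conv_sq_term_nonneg: "conv_sq_term p \<ge> 0"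
  unfolding conv_sq_term_def
  by (auto intro!: mult_nonneg_nonneg simp: less_imp_le[OF odd_recip_pos] split: prod.splits)

lemma has_sum_conv_sq_term:
  assumes "((\<lambda>n. odd_conv n ^ 2) has_sum S) UNIV"
  shows "(conv_sq_term has_sum S) (SIGMA n:UNIV. {..n} \<times> {..n})"
proof (rule has_sum_Sigma_nonneg[OF _ assms conv_sq_term_nonneg])
  fix n
  have "odd_conv n ^ 2 = (\<Sum>j\<le>n. odd_recip j * odd_recip (n - j)) * (\<Sum>l\<le>n. odd_recip l * odd_recip (n - l))"
    by (simp add: odd_conv_def power2_eq_square)
  also have "\<dots> = (\<Sum>p\<in>{..n} \<times> {..n}. conv_sq_term (n, p))"
    by (simp add: sum_product sum.cartesian_product conv_sq_term_def mult.assoc)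
  finally show "((\<lambda>p. conv_sq_term (n, p)) has_sum odd_conv n ^ 2) ({..n} \<times> {..n})"
    by (simp add: has_sum_finiteI)
qed

lemma has_sum_conv_sq_term_diag:
  "(conv_sq_term has_sum (pi ^ 2 / 8) ^ 2) {(n, j, l). j = l \<and> j \<le> n}"
proof -
  have "((\<lambda>j. odd_recip j ^ 2) has_sum pi ^ 2 / 8) UNIV"
    by (rule sums_nonneg_imp_has_sum[OF odd_recip_sq_sums]) simp
  from has_sum_product_nonneg[OF this this]
  have "((\<lambda>(j, k). odd_recip j ^ 2 * odd_recip k ^ 2) has_sum (pi ^ 2 / 8) ^ 2) UNIV"
    by (simp add: power2_eq_square)
  also have "?this \<longleftrightarrow> ?thesis"
    by (rule has_sum_reindex_bij_witness[where i = "\<lambda>(n, j, l). (j, n - j)" and j = "\<lambda>(j, k). (j + k, j, j)"])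
       (auto simp: conv_sq_term_def power2_eq_square)
  finally show ?thesis .
qed

lemma conv_sq_term_shifted:
  "conv_sq_term (j + k + m + 1, j, j + m + 1) =
     (odd_recip j - odd_recip (j + Suc m)) * (odd_recip k - odd_recip (k + Suc m)) / (2 * real (Suc m)) ^ 2"
proof -
  define d where "d = 2 * real (Suc m)"
  have "d \<noteq> 0" by (simp add: d_def)
  have "(odd_recip j - odd_recip (j + Suc m)) * (odd_recip k - odd_recip (k + Suc m)) / d ^ 2
          = d * (odd_recip j * odd_recip (j + Suc m)) * (d * (odd_recip k * odd_recip (k + Suc m))) / d ^ 2"
    by (simp only: odd_recip_diff d_def)
  also have "\<dots> = odd_recip j * odd_recip (j + Suc m) * odd_recip k * odd_recip (k + Suc m)"
    using \<open>d \<noteq> 0\<close> by (simp add: power2_eq_square)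
  also have "\<dots> = conv_sq_term (j + k + m + 1, j, j + m + 1)"
    by (simp add: conv_sq_term_def ac_simps)
  finally show ?thesis by (simp add: d_def)
qed

lemma has_sum_conv_sq_term_upper:
  assumes "((\<lambda>n. odd_conv n ^ 2) has_sum S) UNIV"
  shows "(conv_sq_term has_sum S / 4) {(n, j, l). j < l \<and> l \<le> n}"
proof -
  define g where "g = (\<lambda>(m, j, k).
    (odd_recip j - odd_recip (j + Suc m)) * (odd_recip k - odd_recip (k + Suc m)) / (2 * real (Suc m)) ^ 2)"
  have "(g has_sum S / 4) (SIGMA m:UNIV. UNIV)"
  proof (rule has_sum_Sigma_nonneg)
    fix m
    have "((\<lambda>(j, k). (odd_recip j - odd_recip (j + Suc m)) * (odd_recip k - odd_recip (k + Suc m)))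
            has_sum odd_harm m * odd_harm m) UNIV"
      by (rule has_sum_product_nonneg[OF odd_recip_telescope odd_recip_telescope])
         (simp_all add: odd_recip_antimono)
    from has_sum_cmult_left[OF this, of "1 / (2 * real (Suc m)) ^ 2"]
    have "((\<lambda>p. g (m, p)) has_sum odd_harm m * odd_harm m / (2 * real (Suc m)) ^ 2) UNIV"
      by (simp add: g_def case_prod_unfold)
    also have "odd_harm m * odd_harm m / (2 * real (Suc m)) ^ 2 = odd_conv m ^ 2 / 4"
      unfolding odd_conv_eq
      by (simp add: power_divide power_mult_distrib power2_eq_square; simp add: algebra_simps)
    finally show "((\<lambda>p. g (m, p)) has_sum odd_conv m ^ 2 / 4) UNIV" .
    show "((\<lambda>m. odd_conv m ^ 2 / 4) has_sum S / 4) UNIV"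
      using has_sum_cmult_left[OF assms, of "1 / 4"] by simp
    show "g (m, p) \<ge> 0" for p
      unfolding g_def by (auto simp: odd_recip_antimono split: prod.splits)
  qed
  also have "?this \<longleftrightarrow> ?thesis"
  proof (rule has_sum_reindex_bij_witness[where i = "\<lambda>(n, j, l). (l - j - 1, j, n - l)"
          and j = "\<lambda>(m, j, k). (j + k + m + 1, j, j + m + 1)"])
    show "conv_sq_term ((\<lambda>(m, j, k). (j + k + m + 1, j, j + m + 1)) a) = g a" for a
      by (cases a) (simp only: prod.case g_def conv_sq_term_shifted)
  qed auto
  finally show ?thesis .
qed

lemma has_sum_conv_sq_term_lower:
  assumes "((\<lambda>n. odd_conv n ^ 2) has_sum S) UNIV"
  shows "(conv_sq_term has_sum S / 4) {(n, j, l). l < j \<and> j \<le> n}"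
proof -
  have "(conv_sq_term has_sum S / 4) {(n, j, l). j < l \<and> l \<le> n} \<longleftrightarrow> ?thesis"
    by (rule has_sum_reindex_bij_witness[where i = "\<lambda>(n, j, l). (n, l, j)" and j = "\<lambda>(n, j, l). (n, l, j)"])
       (auto simp: conv_sq_term_def)
  with has_sum_conv_sq_term_upper[OF assms] show ?thesis by simp
qed

lemma odd_conv_sq_sums: "(\<lambda>n. odd_conv n ^ 2) sums (2 * (pi ^ 2 / 8) ^ 2)"
proof -
  define S where "S = (\<Sum>n. odd_conv n ^ 2)"
  have S: "((\<lambda>n. odd_conv n ^ 2) has_sum S) UNIV"
    unfolding S_def by (intro sums_nonneg_imp_has_sum summable_sums summable_odd_conv_sq) simp
  have "(conv_sq_term has_sum (pi ^ 2 / 8) ^ 2 + S / 4 + S / 4)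
          ({(n, j, l). j = l \<and> j \<le> n} \<union> {(n, j, l). j < l \<and> l \<le> n} \<union> {(n, j, l). l < j \<and> j \<le> n})"
    by (intro has_sum_Un_disjoint has_sum_conv_sq_term_diag has_sum_conv_sq_term_upper
          has_sum_conv_sq_term_lower S) auto
  also have "{(n, j, l). j = l \<and> j \<le> n} \<union> {(n, j, l). j < l \<and> l \<le> n} \<union> {(n, j, l). l < j \<and> j \<le> n}
               = (SIGMA n::nat:UNIV. {..n} \<times> {..n})"
    by (auto simp: linorder_neq_iff)
  finally have "S = (pi ^ 2 / 8) ^ 2 + S / 4 + S / 4"
    using has_sum_conv_sq_term[OF S] has_sum_unique by blast
  hence "S = 2 * (pi ^ 2 / 8) ^ 2" by simp
  thus ?thesis using summable_sums[OF summable_odd_conv_sq] by (simp add: S_def)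
qed

theorem mainTheorem1:
  shows "(\<lambda>n::nat. (\<Sum>j=0..n. 1 / ((2 * real j + 1) * (2 * real (n - j) + 1))) ^ 2)
           sums (pi ^ 4 / 32)"
proof -
  have "(\<Sum>j=0..n. 1 / ((2 * real j + 1) * (2 * real (n - j) + 1))) = odd_conv n" for n
    unfolding odd_conv_def atLeast0AtMost by (simp add: odd_recip_def)
  moreover have "pi ^ 4 / 32 = 2 * (pi ^ 2 / 8) ^ 2"
    by (simp add: power2_eq_square power4_eq_xxxx)
  ultimately show ?thesis
    using odd_conv_sq_sums by presburger
qed

end
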